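(* Let $A\in\mathbb{R}^{n\times n}$ be symmetric, with Moore–Penrose pseudoinverse $A^\dagger$, and let $\|\cdot\|$ be the Frobenius norm. (i) The problem $\min_X \tfrac12\|X\|^2$ subject to $AXA=A$ is equivalent to (has the same $X$-solution as) $\min_{\Gamma,X}\tfrac12\|A^\dagger - X\|^2$ subject to $X = A\Gamma A$. (ii) For any $X_k\in\mathbb{R}^{n\times n}$ and $S\in\mathbb{R}^{n\times\tau}$, the problem $$X_{k+1}=\arg\min_X \tfrac12\|X-X_k\|^2\quad\text{subject to}\quad S^\top A X A S = S^\top A S$$ is equivalent to (has the same $X$-solution as) $\min_{\Gamma,X}\tfrac12\|X-A^\dagger\|^2$ subject to $X = X_k + AS\Gamma S^\top A$. (iii) The solution of the problem in (ii) is $$X_{k+1} = X_k + AS(S^\top A^2 S)^\dagger S^\top (A - A X_k A) S (S^\top A^2 S)^\dagger S^\top A.$$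
   Context: $M^\dagger$ denotes the Moore–Penrose pseudoinverse of a real matrix $M$; $\|X\|=\sqrt{\mathrm{Tr}(X^\top X)}$. *)

theory Defs
  imports "HOL-Analysis.Analysis"
begin

definition mp_pinv :: "real^'m^'n \<Rightarrow> real^'n^'m" where
  "mp_pinv A = (THE X. A ** X ** A = A \<and> X ** A ** X = X \<and>
                      transpose (A ** X) = A ** X \<and> transpose (X ** A) = X ** A)"

definition frob :: "real^'m^'n \<Rightarrow> real" where
  "frob X = sqrt (trace (transpose X ** X))"

end

theory Submission
  imports Defs
begin

text \<open>Each problem is a Euclidean projection for the Frobenius inner product
  \<open>\<langle>X, Y\<rangle> = tr (X\<^sup>T Y)\<close>, and the key identity is \<open>\<langle>B \<Gamma> B\<^sup>T, E\<rangle> = \<langle>\<Gamma>, B\<^sup>T E B\<rangle>\<close>: the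
  affine set \<open>{X. B\<^sup>T X B = B\<^sup>T D B}\<close> and the affine set \<open>X\<^sub>k + {B \<Gamma> B\<^sup>T}\<close> have orthogonal
  directions. With \<open>P = (B\<^sup>T B)\<^sup>\<dagger>\<close> one has \<open>B P B\<^sup>T B = B\<close>, so
  \<open>X\<^sub>* = X\<^sub>k + B P B\<^sup>T (D - X\<^sub>k) B P B\<^sup>T\<close> lies in both sets; by Pythagoras it is the point of
  the first set nearest to \<open>X\<^sub>k\<close> and the point of the second set nearest to \<open>D\<close>. Taking
  \<open>B = A S\<close> and \<open>D = A\<^sup>\<dagger>\<close> gives (ii) and (iii). For (i), the Penrose conditions give
  \<open>A\<^sup>\<dagger> = A\<^sup>T (A\<^sup>\<dagger>\<^sup>T A\<^sup>\<dagger> A\<^sup>\<dagger>\<^sup>T) A\<^sup>T\<close>, which is orthogonal to every \<open>E\<close> with \<open>A E A = 0\<close>,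
  so \<open>A\<^sup>\<dagger>\<close> is the least-norm solution of \<open>A X A = A\<close>; and it is trivially the point of
  \<open>{A \<Gamma> A}\<close> nearest to itself.\<close>

lemma matrix_diff_ldistrib: "(A::'a::ring_1^'n^'m) ** (B - C) = A ** B - A ** C"
  by (vector matrix_matrix_mult_def sum_subtractf[symmetric] field_simps)

lemma matrix_diff_rdistrib: "((A::'a::ring_1^'n^'m) - B) ** C = A ** C - B ** C"
  by (vector matrix_matrix_mult_def sum_subtractf[symmetric] field_simps)

lemma inner_matrix_eq_trace: "X \<bullet> Y = trace (transpose X ** (Y::real^'m^'n))"
  unfolding inner_vec_def trace_def matrix_matrix_mult_def transpose_def
  by (simp add: sum.swap[of "\<lambda>i j. X $ i $ j * Y $ i $ j"])

lemma frob_eq_norm: "frob X = norm X"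
  by (simp add: frob_def norm_eq_sqrt_inner inner_matrix_eq_trace)

lemma inner_matrix_sandwich:
  fixes B :: "real^'p^'n" and C :: "real^'q^'m"
  shows "(B ** H ** transpose C) \<bullet> E = H \<bullet> (transpose B ** E ** C)"
proof -
  have "(B ** H ** transpose C) \<bullet> E = trace (C ** (transpose H ** transpose B ** E))"
    by (simp add: inner_matrix_eq_trace matrix_transpose_mul matrix_mul_assoc)
  also have "\<dots> = trace ((transpose H ** transpose B ** E) ** C)"
    by (rule trace_mul_sym)
  also have "\<dots> = H \<bullet> (transpose B ** E ** C)"
    by (simp add: inner_matrix_eq_trace matrix_mul_assoc)
  finally show ?thesis .
qed

lemma orthogonal_sandwich:
  fixes B :: "real^'p^'n" and C :: "real^'q^'m"
  assumes "transpose B ** E ** C = 0"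
  shows "orthogonal (B ** H ** transpose C) E"
  by (simp add: orthogonal_def inner_matrix_sandwich assms)

lemma inner_matrix_vector_transpose:
  fixes A :: "real^'m^'n"
  shows "(A *v u) \<bullet> y = u \<bullet> (transpose A *v y)"
  by (metis dot_lmul_matrix inner_commute transpose_matrix_vector)

lemma orthogonal_projection_matrix_exists:
  fixes V :: "(real^'n) set"
  assumes "subspace V"
  obtains P :: "real^'n^'n"
  where "\<And>x. P *v x \<in> V" "\<And>x v. v \<in> V \<Longrightarrow> orthogonal (x - P *v x) v"
    "\<And>v. v \<in> V \<Longrightarrow> P *v v = v" "transpose P = P"
proof -
  obtain T where T: "T \<subseteq> V" "pairwise orthogonal T" "span T = V"
    using orthogonal_basis_subspace[OF assms] by metis
  define P :: "real^'n^'n" where "P = (\<chi> i j. \<Sum>b\<in>T. b$i * b$j / (b \<bullet> b))"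
  have Pv: "P *v x = (\<Sum>b\<in>T. (b \<bullet> x / (b \<bullet> b)) *\<^sub>R b)" for x
    unfolding P_def
    by (auto simp: vec_eq_iff matrix_vector_mult_def inner_vec_def sum_distrib_left
        sum_distrib_right sum_divide_distrib mult_ac intro: sum.swap)
  have range: "P *v x \<in> V" for x
    unfolding Pv T(3)[symmetric] by (intro span_sum span_mul span_base)
  have residual: "orthogonal (x - P *v x) v" if "v \<in> V" for x v
    using Gram_Schmidt_step[OF T(2)] that T(3) by (simp add: Pv orthogonal_commute)
  show thesis
  proof
    show "P *v v = v" if "v \<in> V" for v
    proof -
      have "v - P *v v \<in> V" using assms that range by (blast intro: subspace_diff)
      from residual[OF this, of v] show ?thesis by (simp add: orthogonal_def)
    qed
    show "transpose P = P"
      by (simp add: P_def transpose_def vec_eq_iff mult.commute)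
  qed (fact range residual)+
qed

definition penrose_conditions :: "real^'m^'n \<Rightarrow> real^'n^'m \<Rightarrow> bool" where
  "penrose_conditions A X \<longleftrightarrow> A ** X ** A = A \<and> X ** A ** X = X \<and>
     transpose (A ** X) = A ** X \<and> transpose (X ** A) = X ** A"

text \<open>With \<open>P\<^sub>V\<close>, \<open>P\<^sub>W\<close> the orthogonal projections onto the column and row space of \<open>A\<close>, the
  pseudoinverse is \<open>X = g \<circ> P\<^sub>V\<close> for a linear inverse \<open>g\<close> of \<open>A\<close> restricted to the row space;
  then \<open>A X = P\<^sub>V\<close> and \<open>X A = P\<^sub>W\<close>.\<close>
lemma penrose_conditions_exist:
  fixes A :: "real^'m^'n"
  shows "\<exists>X. penrose_conditions A X"
proof -
  let ?V = "range (\<lambda>x. A *v x)" and ?W = "range (\<lambda>y. transpose A *v y)"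
  have sV: "subspace ?V" and sW: "subspace ?W"
    by (intro linear_subspace_image matrix_vector_mul_linear subspace_UNIV)+
  obtain PV :: "real^'n^'n" where PV: "\<And>x. PV *v x \<in> ?V" "\<And>v. v \<in> ?V \<Longrightarrow> PV *v v = v"
      "transpose PV = PV"
    using orthogonal_projection_matrix_exists[OF sV] by metis
  obtain PW :: "real^'m^'m" where PW: "\<And>x. PW *v x \<in> ?W"
      "\<And>x w. w \<in> ?W \<Longrightarrow> orthogonal (x - PW *v x) w" "\<And>w. w \<in> ?W \<Longrightarrow> PW *v w = w"
      "transpose PW = PW"
    using orthogonal_projection_matrix_exists[OF sW] by metis
  have A_PW: "A *v (PW *v x) = A *v x" for x
  proof -
    have "(A *v (x - PW *v x)) \<bullet> y = 0" for y
      using PW(2)[of "transpose A *v y" x]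
      by (simp add: inner_matrix_vector_transpose orthogonal_def)
    from this[of "A *v (x - PW *v x)"] show ?thesis
      by (simp add: matrix_vector_mult_diff_distrib)
  qed
  have span_W: "span ?W = ?W" using sW by (simp only: span_eq_iff)
  have inj: "inj_on (\<lambda>x. A *v x) (span ?W)"
  proof (rule inj_onI)
    fix a b assume "a \<in> span ?W" "b \<in> span ?W" and eq: "A *v a = A *v b"
    then have "a - b \<in> ?W" using sW span_W subspace_diff by metis
    then obtain y where y: "a - b = transpose A *v y" by blast
    have "(a - b) \<bullet> (a - b) = (A *v (a - b)) \<bullet> y"
      by (metis y inner_matrix_vector_transpose inner_commute)
    then show "a = b" using eq by (simp add: matrix_vector_mult_diff_distrib)
  qed
  obtain g where g_W: "\<And>y. g y \<in> ?W" and g_linear: "linear g"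
      and g_A: "\<And>x. x \<in> ?W \<Longrightarrow> g (A *v x) = x"
    using linear_inj_on_left_inverse[OF matrix_vector_mul_linear inj] unfolding span_W by blast
  have g_A_PW: "g (A *v x) = PW *v x" for x
    by (metis A_PW PW(1) g_A)
  define X where "X = matrix (g \<circ> (\<lambda>y. PV *v y))"
  have X: "X *v y = g (PV *v y)" for y
    unfolding X_def using g_linear
    by (simp add: linear_compose matrix_vector_mul_linear matrix_works)
  have AX: "A ** X = PV"
  proof -
    have "A *v g (PV *v y) = PV *v y" for y
      using PV(1)[of y] g_A_PW A_PW by (metis imageE)
    then show ?thesis by (simp add: matrix_eq matrix_vector_mul_assoc[symmetric] X)
  qed
  have XA: "X ** A = PW"
    by (simp add: matrix_eq matrix_vector_mul_assoc[symmetric] X PV(2) g_A_PW)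
  have "A ** X ** A = A"
    by (simp add: matrix_eq AX matrix_vector_mul_assoc[symmetric] PV(2))
  moreover have "X ** A ** X = X"
    using PW(3)[OF g_W] by (simp add: matrix_eq XA matrix_vector_mul_assoc[symmetric] X)
  ultimately show ?thesis
    unfolding penrose_conditions_def using AX XA PV(3) PW(4) by blast
qed

lemma penrose_conditions_unique:
  assumes X: "penrose_conditions A X" and Y: "penrose_conditions A Y"
  shows "X = Y"
proof -
  from X Y have x1: "A ** X ** A = A" and x2: "X ** A ** X = X" and x3: "transpose (A ** X) = A ** X"
    and x4: "transpose (X ** A) = X ** A" and y1: "A ** Y ** A = A" and y2: "Y ** A ** Y = Y"
    and y3: "transpose (A ** Y) = A ** Y" and y4: "transpose (Y ** A) = Y ** A"
    by (auto simp: penrose_conditions_def)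
  have "X = X ** transpose (A ** Y ** A ** X)"
    using x2 x3 y1 by (metis matrix_mul_assoc)
  also have "\<dots> = X ** A ** Y"
    using x2 x3 y3 by (metis matrix_mul_assoc matrix_transpose_mul)
  finally have XAY: "X = X ** A ** Y" .
  have "Y = transpose (Y ** A ** X ** A) ** Y"
    using y2 y4 x1 by (metis matrix_mul_assoc)
  also have "\<dots> = X ** A ** Y"
    using y2 y4 x4 by (metis matrix_mul_assoc matrix_transpose_mul)
  finally show ?thesis using XAY by simp
qed

lemma penrose_conditions_mp_pinv: "penrose_conditions A (mp_pinv A)"
  unfolding mp_pinv_def penrose_conditions_def[symmetric]
  using penrose_conditions_exist penrose_conditions_unique by (metis theI')

lemma mp_pinv_eqI: "penrose_conditions A X \<Longrightarrow> mp_pinv A = X"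
  using penrose_conditions_mp_pinv penrose_conditions_unique by blast

lemma mp_pinv_transpose: "mp_pinv (transpose A) = transpose (mp_pinv A)"
proof (rule mp_pinv_eqI)
  show "penrose_conditions (transpose A) (transpose (mp_pinv A))"
    using penrose_conditions_mp_pinv[of A] unfolding penrose_conditions_def
    by (metis matrix_transpose_mul matrix_mul_assoc transpose_transpose)
qed

lemma mp_pinv_symmetric: "transpose A = A \<Longrightarrow> transpose (mp_pinv A) = mp_pinv A"
  by (metis mp_pinv_transpose)

lemma gram_mult_eq_0_imp:
  fixes B :: "real^'p^'n"
  assumes "transpose B ** B ** Y = 0"
  shows "B ** Y = 0"
proof -
  have "(B ** Y) \<bullet> (B ** Y) = trace (transpose Y ** (transpose B ** B ** Y))"
    by (simp add: inner_matrix_eq_trace matrix_transpose_mul matrix_mul_assoc)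
  then show ?thesis using assms by (simp add: trace_def)
qed

lemma mp_pinv_gram_absorb:
  fixes B :: "real^'p^'n"
  defines "Q \<equiv> transpose B ** B"
  shows "B ** mp_pinv Q ** Q = B"
proof -
  have "transpose B ** B ** (mp_pinv Q ** Q - mat 1) = 0"
    using penrose_conditions_mp_pinv[of Q]
    by (simp add: Q_def[symmetric] penrose_conditions_def matrix_diff_ldistrib matrix_mul_assoc)
  then show ?thesis
    by (metis gram_mult_eq_0_imp matrix_diff_ldistrib matrix_mul_assoc matrix_mul_rid eq_iff_diff_eq_0)
qed

lemma mp_pinv_gram_absorb':
  fixes B :: "real^'p^'n"
  defines "Q \<equiv> transpose B ** B"
  shows "Q ** mp_pinv Q ** transpose B = transpose B"
proof -
  have "transpose Q = Q" by (simp add: Q_def matrix_transpose_mul)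
  then show ?thesis
    using arg_cong[OF mp_pinv_gram_absorb[of B], of transpose]
    by (simp add: Q_def[symmetric] matrix_transpose_mul mp_pinv_symmetric matrix_mul_assoc)
qed

lemma is_arg_min_norm_sq_iff:
  fixes g :: "'b \<Rightarrow> 'a::real_inner"
  assumes "P q" and orth: "\<And>p. P p \<Longrightarrow> orthogonal (g p - g q) (g q - a)"
  shows "is_arg_min (\<lambda>p. norm (g p - a)^2 / 2) P p \<longleftrightarrow> P p \<and> g p = g q"
proof -
  have pyth: "norm (g p - a)^2 = norm (g p - g q)^2 + norm (g q - a)^2" if "P p" for p
    using norm_add_Pythagorean[OF orth[OF that]] by simp
  show ?thesis
  proof
    assume "is_arg_min (\<lambda>p. norm (g p - a)^2 / 2) P p"
    then have "P p" and "norm (g p - a)^2 \<le> norm (g q - a)^2"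
      using \<open>P q\<close> by (auto simp: is_arg_min_def not_less)
    then show "P p \<and> g p = g q"
      using pyth[of p] by simp
  next
    assume p: "P p \<and> g p = g q"
    have "norm (g p - a)^2 / 2 \<le> norm (g y - a)^2 / 2" if "P y" for y
      using pyth[OF that] p zero_le_power2[of "norm (g y - g q)"] by (simp del: zero_le_power2)
    with p show "is_arg_min (\<lambda>p. norm (g p - a)^2 / 2) P p"
      by (simp add: is_arg_min_def not_less)
  qed
qed

lemma mp_pinv_eq_sandwich:
  fixes A :: "real^'m^'n"
  defines "D \<equiv> mp_pinv A"
  shows "D = transpose A ** (transpose D ** D ** transpose D) ** transpose A"
proof -
  have D: "D ** A ** D = D" "transpose (A ** D) = A ** D" "transpose (D ** A) = D ** A"
    using penrose_conditions_mp_pinv[of A] by (simp_all add: D_def penrose_conditions_def)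
  have "D = transpose (D ** A) ** D ** transpose (A ** D)"
    using D by (simp add: matrix_mul_assoc)
  then show ?thesis by (simp add: matrix_transpose_mul matrix_mul_assoc)
qed

lemma mp_pinv_min_norm:
  fixes A :: "real^'m^'n"
  shows "{X. is_arg_min (\<lambda>X. norm X ^ 2 / 2) (\<lambda>X. A ** X ** A = A) X} = {mp_pinv A}"
proof -
  let ?D = "mp_pinv A"
  have ADA: "A ** ?D ** A = A"
    using penrose_conditions_mp_pinv[of A] by (simp add: penrose_conditions_def)
  have "orthogonal (X - ?D) (?D - 0)" if "A ** X ** A = A" for X
  proof -
    have "transpose (transpose A) ** (X - ?D) ** A = 0"
      using that ADA by (simp add: matrix_diff_ldistrib matrix_diff_rdistrib)
    then have "orthogonal (transpose A ** (transpose ?D ** ?D ** transpose ?D) ** transpose A) (X - ?D)"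
      by (rule orthogonal_sandwich)
    then show ?thesis
      by (simp only: mp_pinv_eq_sandwich[symmetric]) (simp add: orthogonal_commute)
  qed
  then have "is_arg_min (\<lambda>X. norm X ^ 2 / 2) (\<lambda>X. A ** X ** A = A) X \<longleftrightarrow>
      A ** X ** A = A \<and> X = ?D" for X
    using is_arg_min_norm_sq_iff[where g="\<lambda>X. X" and a=0 and P="\<lambda>X. A ** X ** A = A", OF ADA] by simp
  then show ?thesis using ADA by blast
qed

lemma mp_pinv_nearest_in_sandwich_range:
  fixes A :: "real^'m^'n"
  shows "{X. \<exists>\<Gamma>. is_arg_min (\<lambda>(G, Y). norm (Y - mp_pinv A) ^ 2 / 2)
               (\<lambda>(G, Y). Y = transpose A ** G ** transpose A) (\<Gamma>, X)} = {mp_pinv A}"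
proof -
  let ?D = "mp_pinv A"
  let ?M = "transpose ?D ** ?D ** transpose ?D"
  have feasible: "(\<lambda>(G, Y). Y = transpose A ** G ** transpose A) (?M, ?D)"
    by (simp add: mp_pinv_eq_sandwich[symmetric])
  have "is_arg_min (\<lambda>(G, Y). norm (Y - ?D) ^ 2 / 2)
      (\<lambda>(G, Y). Y = transpose A ** G ** transpose A) p \<longleftrightarrow>
      (\<lambda>(G, Y). Y = transpose A ** G ** transpose A) p \<and> snd p = ?D" for p
    using is_arg_min_norm_sq_iff[where g=snd and a="?D" and q="(?M, ?D)"
        and P="\<lambda>(G, Y). Y = transpose A ** G ** transpose A", OF feasible]
    by (simp add: case_prod_unfold orthogonal_def)
  then show ?thesis using feasible by auto
qed

definition sketched_projection :: "real^'n^'n \<Rightarrow> real^'t^'n \<Rightarrow> real^'n^'n \<Rightarrow> real^'n^'n" where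
  "sketched_projection Xk B D = Xk + B ** (mp_pinv (transpose B ** B)
     ** (transpose B ** (D - Xk) ** B) ** mp_pinv (transpose B ** B)) ** transpose B"

lemma sketched_projection_constraint:
  "transpose B ** sketched_projection Xk B D ** B = transpose B ** D ** B"
proof -
  let ?Q = "transpose B ** B" let ?P = "mp_pinv ?Q"
  have "transpose B ** (sketched_projection Xk B D - Xk) ** B
      = (?Q ** ?P ** transpose B) ** (D - Xk) ** (B ** ?P ** ?Q)"
    by (simp add: sketched_projection_def matrix_mul_assoc)
  also have "\<dots> = transpose B ** (D - Xk) ** B"
    by (simp only: mp_pinv_gram_absorb mp_pinv_gram_absorb')
  finally show ?thesis
    by (simp add: matrix_diff_ldistrib matrix_diff_rdistrib)
qed

lemma sketched_projection_is_arg_min: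
  "{X. is_arg_min (\<lambda>X. norm (X - Xk) ^ 2 / 2)
        (\<lambda>X. transpose B ** X ** B = transpose B ** D ** B) X} = {sketched_projection Xk B D}"
proof -
  let ?Xs = "sketched_projection Xk B D"
  have feasible: "transpose B ** ?Xs ** B = transpose B ** D ** B"
    by (rule sketched_projection_constraint)
  have "orthogonal (X - ?Xs) (?Xs - Xk)" if "transpose B ** X ** B = transpose B ** D ** B" for X
  proof -
    have "transpose B ** (X - ?Xs) ** B = 0"
      using that feasible by (simp add: matrix_diff_ldistrib matrix_diff_rdistrib)
    then show ?thesis
      by (simp add: sketched_projection_def orthogonal_sandwich orthogonal_commute)
  qed
  then have "is_arg_min (\<lambda>X. norm (X - Xk) ^ 2 / 2)
      (\<lambda>X. transpose B ** X ** B = transpose B ** D ** B) X \<longleftrightarrow>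
      transpose B ** X ** B = transpose B ** D ** B \<and> X = ?Xs" for X
    using is_arg_min_norm_sq_iff[where g="\<lambda>X. X" and a=Xk and q="?Xs"
        and P="\<lambda>X. transpose B ** X ** B = transpose B ** D ** B", OF feasible] by simp
  then show ?thesis using feasible by blast
qed

lemma sketched_projection_is_arg_min_range:
  "{X. \<exists>\<Gamma>. is_arg_min (\<lambda>(G, Y). norm (Y - D) ^ 2 / 2)
        (\<lambda>(G, Y). Y = Xk + B ** G ** transpose B) (\<Gamma>, X)} = {sketched_projection Xk B D}"
proof -
  let ?Xs = "sketched_projection Xk B D"
  let ?P = "mp_pinv (transpose B ** B)"
  define G\<^sub>s where "G\<^sub>s = ?P ** (transpose B ** (D - Xk) ** B) ** ?P"
  have Xs: "?Xs = Xk + B ** G\<^sub>s ** transpose B"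
    by (simp add: G\<^sub>s_def sketched_projection_def)
  have feasible: "(\<lambda>(G, Y). Y = Xk + B ** G ** transpose B) (G\<^sub>s, ?Xs)"
    by (simp add: Xs)
  have "orthogonal (Y - ?Xs) (?Xs - D)" if "Y = Xk + B ** G ** transpose B" for G Y
  proof -
    have "transpose B ** (?Xs - D) ** B = 0"
      using sketched_projection_constraint[of B Xk D]
      by (simp add: matrix_diff_ldistrib matrix_diff_rdistrib)
    then have "orthogonal (B ** (G - G\<^sub>s) ** transpose B) (?Xs - D)"
      by (rule orthogonal_sandwich)
    then show ?thesis
      by (simp add: that Xs matrix_diff_ldistrib matrix_diff_rdistrib)
  qed
  then have "is_arg_min (\<lambda>(G, Y). norm (Y - D) ^ 2 / 2)
      (\<lambda>(G, Y). Y = Xk + B ** G ** transpose B) p \<longleftrightarrow>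
      (\<lambda>(G, Y). Y = Xk + B ** G ** transpose B) p \<and> snd p = ?Xs" for p
    using is_arg_min_norm_sq_iff[where g=snd and a=D and q="(G\<^sub>s, ?Xs)"
        and P="\<lambda>(G, Y). Y = Xk + B ** G ** transpose B", OF feasible]
    by (simp add: case_prod_unfold)
  then show ?thesis using feasible by auto
qed

theorem theorem3:
  fixes A :: "real^'n^'n" and Xk :: "real^'n^'n" and S :: "real^'t^'n"
  assumes symA: "transpose A = A"
  shows
   "{X. is_arg_min (\<lambda>X. frob X ^ 2 / 2) (\<lambda>X. A ** X ** A = A) X}
      = {X. \<exists>\<Gamma>::real^'n^'n. is_arg_min (\<lambda>(G, Y). frob (mp_pinv A - Y) ^ 2 / 2)
                               (\<lambda>(G, Y). Y = A ** G ** A) (\<Gamma>, X)}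
    \<and> {X. is_arg_min (\<lambda>X. frob (X - Xk) ^ 2 / 2)
                      (\<lambda>X. transpose S ** A ** X ** A ** S = transpose S ** A ** S) X}
      = {X. \<exists>\<Gamma>::real^'t^'t. is_arg_min (\<lambda>(G, Y). frob (Y - mp_pinv A) ^ 2 / 2)
                               (\<lambda>(G, Y). Y = Xk + A ** S ** G ** transpose S ** A) (\<Gamma>, X)}
    \<and> {X. is_arg_min (\<lambda>X. frob (X - Xk) ^ 2 / 2)
                      (\<lambda>X. transpose S ** A ** X ** A ** S = transpose S ** A ** S) X}
      = {Xk + A ** S ** mp_pinv (transpose S ** A ** A ** S) ** transpose S
              ** (A - A ** Xk ** A) ** S ** mp_pinv (transpose S ** A ** A ** S)
              ** transpose S ** A}"
proof -
  let ?D = "mp_pinv A"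
  define B where "B = A ** S"
  have tB: "transpose B = transpose S ** A"
    using symA by (simp add: B_def matrix_transpose_mul)
  have sketch: "transpose S ** A ** X ** A ** S = transpose B ** X ** B" for X
    unfolding tB by (simp add: B_def matrix_mul_assoc)
  have "A ** ?D ** A = A"
    using penrose_conditions_mp_pinv[of A] by (simp add: penrose_conditions_def)
  then have target: "transpose S ** A ** S = transpose B ** ?D ** B"
    using sketch[of ?D] by (metis matrix_mul_assoc)
  have residual: "transpose S ** (A - A ** Xk ** A) ** S = transpose B ** (?D - Xk) ** B"
    by (simp add: matrix_diff_ldistrib matrix_diff_rdistrib target sketch matrix_mul_assoc)
  have gram: "transpose S ** A ** A ** S = transpose B ** B"
    unfolding tB by (simp add: B_def matrix_mul_assoc)
  have "Xk + A ** S ** mp_pinv (transpose S ** A ** A ** S) ** transpose S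
      ** (A - A ** Xk ** A) ** S ** mp_pinv (transpose S ** A ** A ** S) ** transpose S ** A
      = sketched_projection Xk B ?D"
    unfolding sketched_projection_def residual[symmetric] gram[symmetric] unfolding tB
    by (simp add: B_def matrix_mul_assoc)
  moreover have "(\<lambda>(G, Y). norm (?D - Y) ^ 2 / 2) = (\<lambda>(G::real^'n^'n, Y). norm (Y - ?D) ^ 2 / 2)"
    by (simp add: norm_minus_commute)
  moreover have "A ** S ** G ** transpose S ** A = B ** G ** transpose B" for G :: "real^'t^'t"
    unfolding tB by (simp add: B_def matrix_mul_assoc)
  ultimately show ?thesis
    using mp_pinv_min_norm[of A] mp_pinv_nearest_in_sandwich_range[of A]
      sketched_projection_is_arg_min[where Xk=Xk and B=B and D="?D"]
      sketched_projection_is_arg_min_range[where Xk=Xk and B=B and D="?D"]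
    by (simp add: frob_eq_norm sketch target symA)
qed

end
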